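(* Let $f:\Sigma^\ast\to\Sigma^\ast$ be a total rational function, let $\sim_R$ be a left congruence of finite index with $\sim_R\sqsubseteq\sim_{R_0}$, and let $L^R$ be the left automaton of the canonical bimachine $B^R$. Then $\sim_{L^0}\sqsubseteq\sim_{L^R}$, where $L^0=L^{R_0}$.
   Context: For words $u,v$, $u\wedge v$ denotes their longest common prefix, $\bigwedge X$ the longest common prefix of a nonempty set $X$, and $\lVert u,v\rVert=|u|+|v|-2|u\wedge v|$. The left syntactic congruence: $u\sim_{R_0}v$ iff for all $w$, $wu\in\mathrm{dom}(f)\Leftrightarrow wv\in\mathrm{dom}(f)$ and $\sup\{\lVert f(wu),f(wv)\rVert: wu\in\mathrm{dom}f\}<\infty$. For a left congruence $\sim_R$ of finite index finer than $\sim_{R_0}$, let $R=\Sigma^\ast/\sim_R$, $r_0=[\varepsilon]$, and for $r=[u]$, $\sigma r=[\sigma u]$ (this is the right automaton of $B^R$). For $r\in R$ and $u\in\Sigma^\ast$ put $\widehat f_r(u)=\bigwedge\{f(uv): v\in r, uv\in\mathrm{dom}(f)\}$ (defined when this set is nonempty). Define the right congruence $u\sim_{L^R}v$ iff for all $\sigma\in\Sigma$, $w\in\Sigma^\ast$, $r\in R$: $\widehat f_{\sigma r}(uw)^{-1}\widehat f_r(uw\sigma)=\widehat f_{\sigma r}(vw)^{-1}\widehat f_r(vw\sigma)$ and $\widehat f_{r_0}(uw)^{-1}f(uw)=\widehat f_{r_0}(vw)^{-1}f(vw)$, whenever these expressions are defined. $L^R$ is the deterministic left automaton $(\Sigma^\ast/\sim_{L^R},[\varepsilon],[u]\xrightarrow{\sigma}[u\sigma])$;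 it is the left automaton of a bimachine $B^R$ with right automaton $R$ defining $f$. $L^0$ denotes $L^{R_0}$ (taking $\sim_R=\sim_{R_0}$). For a deterministic automaton $A$ with initial state $q_0$, $u\sim_A v$ iff $A$ reaches the same states from $q_0$ on $u$ and on $v$ (so $\sim_{L^R}$ is the congruence defining $L^R$). $\sim_1\sqsubseteq\sim_2$ means $u\sim_1v\Rightarrow u\sim_2v$. *)

theory Defs
  imports Main "HOL-Library.Sublist"
begin

inductive run :: "(nat \<times> 'a \<times> 'b list \<times> nat) set \<Rightarrow> nat \<Rightarrow> 'a list \<Rightarrow> 'b list \<Rightarrow> nat \<Rightarrow> bool"
  for D where
  run_Nil: "run D p [] [] p"
| run_Cons: "(p, a, x, p') \<in> D \<Longrightarrow> run D p' u y q \<Longrightarrow> run D p (a # u) (x @ y) q"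

text \<open>A total function is rational iff its graph is exactly the relation realised by a
  finite-state transducer (finite states Q, initial states I, finite transitions D,
  final output function Fin).\<close>
definition rational_function :: "('a list \<Rightarrow> 'b list) \<Rightarrow> bool" where
  "rational_function f \<longleftrightarrow>
     (\<exists>(Q::nat set) I D (Fin :: nat \<Rightarrow> 'b list option).
        finite Q \<and> I \<subseteq> Q \<and> finite D \<and> D \<subseteq> Q \<times> UNIV \<times> UNIV \<times> Q \<and>
        (\<forall>q. Fin q \<noteq> None \<longrightarrow> q \<in> Q) \<and>
        (\<forall>u v. (\<exists>i q y z. i \<in> I \<and> run D i u y q \<and> Fin q = Some z \<and> v = y @ z)
                 \<longleftrightarrow> v = f u))"

definition lcp :: "'a list \<Rightarrow> 'a list \<Rightarrow> 'a list" where
  "lcp u v = Longest_common_prefix {u, v}"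

definition wdist :: "'a list \<Rightarrow> 'a list \<Rightarrow> nat" where
  "wdist u v = length u + length v - 2 * length (lcp u v)"

text \<open>Left quotient a^{-1} b, defined only when a is a prefix of b.\<close>
definition lquot :: "'a list option \<Rightarrow> 'a list option \<Rightarrow> 'a list option" where
  "lquot a b = (case (a, b) of (Some a', Some b') \<Rightarrow>
       (if prefix a' b' then Some (drop (length a') b') else None) | _ \<Rightarrow> None)"

text \<open>Left syntactic congruence ~R0 (dom f = all words, since f is total).\<close>
definition R0 :: "('a list \<Rightarrow> 'b list) \<Rightarrow> 'a list \<Rightarrow> 'a list \<Rightarrow> bool" where
  "R0 f u v \<longleftrightarrow> (\<exists>B. \<forall>w. wdist (f (w @ u)) (f (w @ v)) \<le> B)"

definition left_congruence :: "('a list \<Rightarrow> 'a list \<Rightarrow> bool) \<Rightarrow> bool" where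
  "left_congruence R \<longleftrightarrow> equivp R \<and> (\<forall>w u v. R u v \<longrightarrow> R (w @ u) (w @ v))"

definition finite_index :: "('a list \<Rightarrow> 'a list \<Rightarrow> bool) \<Rightarrow> bool" where
  "finite_index R \<longleftrightarrow> finite (UNIV // {(u, v). R u v})"

definition cls :: "('a list \<Rightarrow> 'a list \<Rightarrow> bool) \<Rightarrow> 'a list \<Rightarrow> 'a list set" where
  "cls R u = {v. R u v}"

definition fhat :: "('a list \<Rightarrow> 'b list) \<Rightarrow> 'a list set \<Rightarrow> 'a list \<Rightarrow> 'b list option" where
  "fhat f r u = (if r = {} then None else Some (Longest_common_prefix {f (u @ v) | v. v \<in> r}))"

text \<open>The right congruence ~L^R. The states r of R are the classes [x]; \<sigma> r = [\<sigma> x].\<close>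
definition LR :: "('a list \<Rightarrow> 'b list) \<Rightarrow> ('a list \<Rightarrow> 'a list \<Rightarrow> bool) \<Rightarrow> 'a list \<Rightarrow> 'a list \<Rightarrow> bool" where
  "LR f R u v \<longleftrightarrow>
     (\<forall>\<sigma> w x.
        lquot (fhat f (cls R (\<sigma> # x)) (u @ w)) (fhat f (cls R x) (u @ w @ [\<sigma>])) =
        lquot (fhat f (cls R (\<sigma> # x)) (v @ w)) (fhat f (cls R x) (v @ w @ [\<sigma>])))
   \<and> (\<forall>w. lquot (fhat f (cls R []) (u @ w)) (Some (f (u @ w))) =
          lquot (fhat f (cls R []) (v @ w)) (Some (f (v @ w))))"

end

theory Submission
  imports Defs
begin

text \<open>Write \<open>H u w\<close> (\<open>fhat0\<close>) for the longest common prefix of the outputs \<open>f (u y)\<close>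
  over the \<open>R0\<close>-class of \<open>w\<close>, and split \<open>f (u w) = H u w \<cdot> res u w\<close> (\<open>residual0\<close>).
  Reading \<open>w\<close> letter by letter, \<open>res u w\<close> telescopes into the increments
  \<open>H u (\<sigma> w')\<^sup>-\<^sup>1 H (u \<sigma>) w'\<close> followed by \<open>res (u w) []\<close>; these are exactly the quantities that
  \<open>LR f (R0 f) u v\<close> declares equal for \<open>u\<close> and \<open>v\<close>, so \<open>res u w = res v w\<close> for all \<open>w\<close>.
  Since \<open>R\<close> refines \<open>R0\<close>, the class \<open>r\<close> of \<open>x\<close> gives \<open>fhat f r u = H u x \<cdot> \<And>{res u y | y \<in> r}\<close>,
  so each quotient in the definition of \<open>LR f R\<close> is the corresponding quotient for \<open>R0\<close>
  followed by a word built from residuals alone.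
  Neither rationality of \<open>f\<close> nor finiteness of the index is needed.\<close>

lemma Longest_common_prefix_image_append:
  assumes "L \<noteq> {}"
  shows "Longest_common_prefix ((@) c ` L) = c @ Longest_common_prefix L"
proof (induction c)
  case (Cons a c)
  have "(@) (a # c) ` L = (#) a ` ((@) c ` L)" by auto
  then show ?case using Cons assms by (simp add: Longest_common_prefix_image_Cons)
qed simp

lemma Longest_common_prefix_antimono:
  assumes "A \<subseteq> B" "A \<noteq> {}"
  shows "prefix (Longest_common_prefix B) (Longest_common_prefix A)"
  using assms by (intro Longest_common_prefix_max_prefix) (auto intro: Longest_common_prefix_prefix)

lemma lcp_self: "lcp x x = x"
  unfolding lcp_def by (rule Longest_common_prefix_eq) (auto simp: prefix_length_le)

lemma lcp_commute: "lcp x y = lcp y x"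
  unfolding lcp_def by (simp add: insert_commute)

lemma prefix_lcp1: "prefix (lcp x y) x"
  and prefix_lcp2: "prefix (lcp x y) y"
  unfolding lcp_def by (auto intro: Longest_common_prefix_prefix)

lemma length_lcp_ge_if_prefix:
  "prefix p x \<Longrightarrow> prefix p y \<Longrightarrow> length p \<le> length (lcp x y)"
  unfolding lcp_def by (intro Longest_common_prefix_longest) auto

lemma wdist_self: "wdist x x = 0"
  by (simp add: wdist_def lcp_self)

lemma wdist_commute: "wdist x y = wdist y x"
  by (simp add: wdist_def lcp_commute)

lemma wdist_triangle: "wdist x z \<le> wdist x y + wdist y z"
proof -
  let ?p = "lcp x y" and ?q = "lcp y z"
  have "prefix ?p y" "prefix ?q y"
    by (rule prefix_lcp2, rule prefix_lcp1)
  then consider "prefix ?p ?q" | "prefix ?q ?p"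
    using prefix_same_cases by blast
  then have "min (length ?p) (length ?q) \<le> length (lcp x z)"
  proof cases
    case 1
    then have "prefix ?p z"
      using prefix_lcp2[of y z] prefix_order.trans by blast
    then show ?thesis
      using prefix_lcp1[of x y] length_lcp_ge_if_prefix by fastforce
  next
    case 2
    then have "prefix ?q x"
      using prefix_lcp1[of x y] prefix_order.trans by blast
    then show ?thesis
      using prefix_lcp2[of y z] length_lcp_ge_if_prefix by fastforce
  qed
  moreover have "length (lcp x z) \<le> length x" "length (lcp x z) \<le> length z"
    "length ?p \<le> length x" "length ?p \<le> length y" "length ?q \<le> length y" "length ?q \<le> length z"
    using prefix_lcp1 prefix_lcp2 prefix_length_le by blast+
  ultimately show ?thesis
    unfolding wdist_def by linarith
qed

lemma R0_refl: "R0 f u u"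
  unfolding R0_def by (auto simp: wdist_self)

lemma R0_sym: "R0 f u v \<Longrightarrow> R0 f v u"
  unfolding R0_def by (metis wdist_commute)

lemma R0_trans:
  assumes "R0 f u v" "R0 f v w"
  shows "R0 f u w"
proof -
  obtain B C where "\<forall>z. wdist (f (z @ u)) (f (z @ v)) \<le> B" "\<forall>z. wdist (f (z @ v)) (f (z @ w)) \<le> C"
    using assms unfolding R0_def by blast
  then have "\<forall>z. wdist (f (z @ u)) (f (z @ w)) \<le> B + C"
    by (meson add_mono order_trans wdist_triangle)
  then show ?thesis
    unfolding R0_def by blast
qed

lemma R0_append_left: "R0 f u v \<Longrightarrow> R0 f (w @ u) (w @ v)"
  unfolding R0_def by (metis append.assoc)

definition fhat0 :: "('a list \<Rightarrow> 'b list) \<Rightarrow> 'a list \<Rightarrow> 'a list \<Rightarrow> 'b list" where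
  "fhat0 f u w = Longest_common_prefix {f (u @ y) | y. R0 f w y}"

definition residual0 :: "('a list \<Rightarrow> 'b list) \<Rightarrow> 'a list \<Rightarrow> 'a list \<Rightarrow> 'b list" where
  "residual0 f u w = drop (length (fhat0 f u w)) (f (u @ w))"

definition increment0 :: "('a list \<Rightarrow> 'b list) \<Rightarrow> 'a list \<Rightarrow> 'a \<Rightarrow> 'a list \<Rightarrow> 'b list" where
  "increment0 f u \<sigma> w = drop (length (fhat0 f u (\<sigma> # w))) (fhat0 f (u @ [\<sigma>]) w)"

lemma fhat_cls_R0: "fhat f (cls (R0 f) w) u = Some (fhat0 f u w)"
  unfolding fhat_def cls_def fhat0_def using R0_refl[of f w] by auto

lemma fhat0_cong: "R0 f w y \<Longrightarrow> fhat0 f u y = fhat0 f u w"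
  unfolding fhat0_def by (metis R0_sym R0_trans)

lemma f_eq_fhat0_residual0: "f (u @ w) = fhat0 f u w @ residual0 f u w"
proof -
  have "prefix (fhat0 f u w) (f (u @ w))"
    unfolding fhat0_def using R0_refl[of f w] by (auto intro: Longest_common_prefix_prefix)
  then show ?thesis
    unfolding residual0_def by (auto simp: prefix_def)
qed

lemma fhat0_snoc_eq: "fhat0 f (u @ [\<sigma>]) w = fhat0 f u (\<sigma> # w) @ increment0 f u \<sigma> w"
proof -
  have "{f ((u @ [\<sigma>]) @ y) | y. R0 f w y} \<subseteq> {f (u @ y) | y. R0 f (\<sigma> # w) y}"
    using R0_append_left[of f _ _ "[\<sigma>]"] by fastforce
  moreover have "{f ((u @ [\<sigma>]) @ y) | y. R0 f w y} \<noteq> {}"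
    using R0_refl[of f w] by auto
  ultimately have "prefix (fhat0 f u (\<sigma> # w)) (fhat0 f (u @ [\<sigma>]) w)"
    unfolding fhat0_def by (rule Longest_common_prefix_antimono)
  then show ?thesis
    unfolding increment0_def by (auto simp: prefix_def)
qed

lemma residual0_Cons:
  "residual0 f u (\<sigma> # w) = increment0 f u \<sigma> w @ residual0 f (u @ [\<sigma>]) w"
  using f_eq_fhat0_residual0[of f u "\<sigma> # w"] f_eq_fhat0_residual0[of f "u @ [\<sigma>]" w]
  by (simp add: fhat0_snoc_eq)

lemma lquot_Some_append: "lquot (Some x) (Some (x @ y)) = Some y"
  unfolding lquot_def by simp

lemma lquot_append_cancel: "lquot (Some (z @ x)) (Some (z @ y)) = lquot (Some x) (Some y)"
  unfolding lquot_def by simp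

lemma LR_append_right: "LR f R u v \<Longrightarrow> LR f R (u @ z) (v @ z)"
  unfolding LR_def by (metis append.assoc)

lemma increment0_LR0_eq: "LR f (R0 f) u v \<Longrightarrow> increment0 f u \<sigma> w = increment0 f v \<sigma> w"
  unfolding LR_def fhat_cls_R0
  by (metis append.left_neutral append_Nil2 fhat0_snoc_eq lquot_Some_append option.inject)

lemma residual0_Nil_LR0_eq: "LR f (R0 f) u v \<Longrightarrow> residual0 f u [] = residual0 f v []"
  unfolding LR_def fhat_cls_R0
  by (metis append_Nil2 f_eq_fhat0_residual0 lquot_Some_append option.inject)

lemma residual0_LR0_eq: "LR f (R0 f) u v \<Longrightarrow> residual0 f u w = residual0 f v w"
proof (induction w arbitrary: u v)
  case Nil
  then show ?case by (rule residual0_Nil_LR0_eq)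
next
  case (Cons \<sigma> w)
  then show ?case
    by (simp add: residual0_Cons increment0_LR0_eq LR_append_right)
qed

lemma fhat_cls_refinement:
  assumes "left_congruence R" and "\<forall>u v. R u v \<longrightarrow> R0 f u v"
  shows "fhat f (cls R x) u = Some (fhat0 f u x @ Longest_common_prefix {residual0 f u y | y. R x y})"
proof -
  have "R x x"
    using assms(1) unfolding left_congruence_def by (meson equivp_reflp)
  then have nonempty: "{residual0 f u y | y. R x y} \<noteq> {}" "cls R x \<noteq> {}"
    by (auto simp: cls_def)
  have "f (u @ y) = fhat0 f u x @ residual0 f u y" if "R x y" for y
    using that assms(2) by (metis f_eq_fhat0_residual0 fhat0_cong)
  then have "{f (u @ y) | y. y \<in> cls R x} = (@) (fhat0 f u x) ` {residual0 f u y | y. R x y}"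
    by (auto simp: cls_def) metis
  then show ?thesis
    unfolding fhat_def using nonempty(2) Longest_common_prefix_image_append[OF nonempty(1)] by simp
qed

context
  fixes f :: "'a list \<Rightarrow> 'b list" and R :: "'a list \<Rightarrow> 'a list \<Rightarrow> bool"
  assumes left_congruence: "left_congruence R"
    and refines_R0: "\<forall>u v. R u v \<longrightarrow> R0 f u v"
begin

lemma lquot_fhat_transition_LR0_eq:
  assumes "LR f (R0 f) u v"
  shows "lquot (fhat f (cls R (\<sigma> # x)) u) (fhat f (cls R x) (u @ [\<sigma>])) =
         lquot (fhat f (cls R (\<sigma> # x)) v) (fhat f (cls R x) (v @ [\<sigma>]))"
proof -
  have "LR f (R0 f) (u @ [\<sigma>]) (v @ [\<sigma>])"
    using assms by (rule LR_append_right)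
  then show ?thesis
    using assms
    by (simp add: fhat_cls_refinement[OF left_congruence refines_R0] fhat0_snoc_eq
        lquot_append_cancel residual0_LR0_eq increment0_LR0_eq)
qed

lemma lquot_fhat_final_LR0_eq:
  assumes "LR f (R0 f) u v"
  shows "lquot (fhat f (cls R []) u) (Some (f u)) = lquot (fhat f (cls R []) v) (Some (f v))"
  using assms f_eq_fhat0_residual0[of f u "[]"] f_eq_fhat0_residual0[of f v "[]"]
  by (simp add: fhat_cls_refinement[OF left_congruence refines_R0]
      lquot_append_cancel residual0_LR0_eq)

end

theorem mainTheorem13:
  fixes f :: "('a::finite) list \<Rightarrow> 'a list"
    and R :: "'a list \<Rightarrow> 'a list \<Rightarrow> bool"
  assumes "rational_function f"
    and "left_congruence R"
    and "finite_index R"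
    and "\<forall>u v. R u v \<longrightarrow> R0 f u v"
  shows "\<forall>u v. LR f (R0 f) u v \<longrightarrow> LR f R u v"
proof (intro allI impI)
  fix u v
  assume "LR f (R0 f) u v"
  then have LR0: "LR f (R0 f) (u @ w) (v @ w)" for w
    by (rule LR_append_right)
  show "LR f R u v"
    unfolding LR_def
    using lquot_fhat_transition_LR0_eq[OF assms(2,4) LR0] lquot_fhat_final_LR0_eq[OF assms(2,4) LR0]
    by simp
qed

end
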